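(* Let $X=\{x_j:j\in I\}$ with $I\subseteq\mathbb Z$ an interval of integers and $x_j<x_{j+1}$, and let parties $A,B$ have weak preference orders $\succeq_A,\succeq_B$ on $X$ with unique ideal points $\tau_A,\tau_B$. Then the parties agree on cross-side comparisons, meaning that for all positive integers $a,b$ such that the relevant policies belong to $X$, \[ R_A(a)\succeq_A L_A(b)\iff R_B(a)\succeq_B L_B(b) \quad\text{and}\quad L_A(b)\succeq_A R_A(a)\iff L_B(b)\succeq_B R_B(a), \] provided either of the following holds (where for each party $i$, $v_i:X\to\mathbb R$ is a utility function representing $\succeq_i$, i.e. $x\succeq_i y\iff v_i(x)\ge v_i(y)$): \begin{enumerate} \item[(i)] (Symmetric single-peaked utilities) for each party $i$ there is a strictly decreasing function $\phi_i:\mathbb Z_{\ge0}\to\mathbb R$ such that, if $\tau_i=x_c$, then $v_i(x_m)=\phi_i(|m-c|)$ for all $x_m\in X$; \item[(ii)] (Common utility shape) there is a function $u:\mathbb Z\to\mathbb R$ such that for each party $i$, if $\tau_i=x_c$, then $v_i(x_m)=u(m-c)$ for all $x_m\in X$. \end{enumerate}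
   Context: Ordinal displacement notation: for a party $i$ with ideal point $\tau_i=x_c$ and a positive integer $k$, $R_i(k)=x_{c+k}$ and $L_i(k)=x_{c-k}$, whenever these policies belong to $X$; i.e. $R_i(k)$ and $L_i(k)$ are the policies $k$ ordinal steps to the right and to the left of party $i$'s ideal point. *)

theory Defs
  imports Complex_Main
begin

definition int_interval :: "int set \<Rightarrow> bool" where
  "int_interval I \<longleftrightarrow> (\<forall>i\<in>I. \<forall>k\<in>I. \<forall>j. i \<le> j \<and> j \<le> k \<longrightarrow> j \<in> I)"

definition weak_order_on :: "'a set \<Rightarrow> ('a \<Rightarrow> 'a \<Rightarrow> bool) \<Rightarrow> bool" where
  "weak_order_on X P \<longleftrightarrow>
     (\<forall>x\<in>X. \<forall>y\<in>X. P x y \<or> P y x) \<and>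
     (\<forall>x\<in>X. \<forall>y\<in>X. \<forall>z\<in>X. P x y \<longrightarrow> P y z \<longrightarrow> P x z)"

definition unique_ideal_point :: "'a set \<Rightarrow> ('a \<Rightarrow> 'a \<Rightarrow> bool) \<Rightarrow> 'a \<Rightarrow> bool" where
  "unique_ideal_point X P t \<longleftrightarrow> t \<in> X \<and> (\<forall>y\<in>X. y \<noteq> t \<longrightarrow> P t y \<and> \<not> P y t)"

definition represents :: "'a set \<Rightarrow> ('a \<Rightarrow> 'a \<Rightarrow> bool) \<Rightarrow> ('a \<Rightarrow> real) \<Rightarrow> bool" where
  "represents X P v \<longleftrightarrow> (\<forall>x\<in>X. \<forall>y\<in>X. P x y \<longleftrightarrow> v x \<ge> v y)"

definition symmetric_sp :: "int set \<Rightarrow> (int \<Rightarrow> real) \<Rightarrow> (real \<Rightarrow> real \<Rightarrow> bool) \<Rightarrow> real \<Rightarrow> bool" where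
  "symmetric_sp I x P t \<longleftrightarrow>
     (\<exists>v \<phi>. represents (x ` I) P v \<and> (\<forall>m n :: nat. m < n \<longrightarrow> \<phi> n < \<phi> m) \<and>
        (\<forall>c\<in>I. x c = t \<longrightarrow> (\<forall>m\<in>I. v (x m) = \<phi> (nat \<bar>m - c\<bar>))))"

definition shape_utility :: "int set \<Rightarrow> (int \<Rightarrow> real) \<Rightarrow> (real \<Rightarrow> real \<Rightarrow> bool) \<Rightarrow> real \<Rightarrow> (int \<Rightarrow> real) \<Rightarrow> bool" where
  "shape_utility I x P t u \<longleftrightarrow>
     (\<exists>v. represents (x ` I) P v \<and>
        (\<forall>c\<in>I. x c = t \<longrightarrow> (\<forall>m\<in>I. v (x m) = u (m - c))))"

end

theory Submission
  imports Defs
begin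

(* Under either condition a party with ideal point x_c ranks x_m against x_n by the
   displacements m - c and n - c alone: by comparing |m - c| with |n - c| in case (i), and
   u (m - c) with u (n - c) in case (ii). For every party, R(a) and L(b) have displacements
   a and -b, so all parties rank them alike. *)

lemma represents_iff:
  assumes "represents X P v" "x \<in> X" "y \<in> X"
  shows "P x y \<longleftrightarrow> v y \<le> v x"
  using assms unfolding represents_def by blast

lemma strictly_decreasing_le_iff:
  fixes f :: "'a::linorder \<Rightarrow> 'b::linorder"
  assumes "\<And>m n. m < n \<Longrightarrow> f n < f m"
  shows "f n \<le> f m \<longleftrightarrow> m \<le> n"
  using assms by (metis le_less not_le)

lemma symmetric_sp_iff_dist:
  assumes "symmetric_sp I x P t" "c \<in> I" "x c = t" "m \<in> I" "n \<in> I"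
  shows "P (x m) (x n) \<longleftrightarrow> \<bar>m - c\<bar> \<le> \<bar>n - c\<bar>"
proof -
  obtain v \<phi> where v: "represents (x ` I) P v"
    and \<phi>: "\<forall>m n :: nat. m < n \<longrightarrow> \<phi> n < \<phi> m"
    and v_\<phi>: "\<forall>k\<in>I. v (x k) = \<phi> (nat \<bar>k - c\<bar>)"
    using assms(1-3) unfolding symmetric_sp_def by blast
  have "P (x m) (x n) \<longleftrightarrow> \<phi> (nat \<bar>n - c\<bar>) \<le> \<phi> (nat \<bar>m - c\<bar>)"
    using represents_iff[OF v] v_\<phi> assms(4,5) by simp
  also have "\<dots> \<longleftrightarrow> nat \<bar>m - c\<bar> \<le> nat \<bar>n - c\<bar>"
    using strictly_decreasing_le_iff \<phi> by blast
  finally show ?thesis by (simp add: nat_le_eq_zle)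
qed

lemma shape_utility_iff:
  assumes "shape_utility I x P t u" "c \<in> I" "x c = t" "m \<in> I" "n \<in> I"
  shows "P (x m) (x n) \<longleftrightarrow> u (n - c) \<le> u (m - c)"
proof -
  obtain v where v: "represents (x ` I) P v" and v_u: "\<forall>k\<in>I. v (x k) = u (k - c)"
    using assms(1-3) unfolding shape_utility_def by blast
  show ?thesis
    using represents_iff[OF v] v_u assms(4,5) by simp
qed

theorem proposition3:
  fixes I :: "int set" and x :: "int \<Rightarrow> real"
    and PA PB :: "real \<Rightarrow> real \<Rightarrow> bool" and tA tB :: real
  assumes I: "int_interval I"
    and mono: "\<forall>j. j \<in> I \<longrightarrow> j + 1 \<in> I \<longrightarrow> x j < x (j + 1)"
    and wA: "weak_order_on (x ` I) PA" and wB: "weak_order_on (x ` I) PB"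
    and iA: "unique_ideal_point (x ` I) PA tA"
    and iB: "unique_ideal_point (x ` I) PB tB"
    and cond: "(symmetric_sp I x PA tA \<and> symmetric_sp I x PB tB) \<or>
               (\<exists>u. shape_utility I x PA tA u \<and> shape_utility I x PB tB u)"
  shows "\<forall>cA\<in>I. \<forall>cB\<in>I. \<forall>a b :: int.
           x cA = tA \<longrightarrow> x cB = tB \<longrightarrow> 0 < a \<longrightarrow> 0 < b \<longrightarrow>
           cA + a \<in> I \<longrightarrow> cA - b \<in> I \<longrightarrow> cB + a \<in> I \<longrightarrow> cB - b \<in> I \<longrightarrow>
           (PA (x (cA + a)) (x (cA - b)) \<longleftrightarrow> PB (x (cB + a)) (x (cB - b))) \<and>
           (PA (x (cA - b)) (x (cA + a)) \<longleftrightarrow> PB (x (cB - b)) (x (cB + a)))"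
proof (intro ballI allI impI)
  fix cA cB a b :: int
  assume cA: "cA \<in> I" "x cA = tA" and cB: "cB \<in> I" "x cB = tB"
    and pos: "0 < a" "0 < b"
    and A_in: "cA + a \<in> I" "cA - b \<in> I" and B_in: "cB + a \<in> I" "cB - b \<in> I"
  from cond show "(PA (x (cA + a)) (x (cA - b)) \<longleftrightarrow> PB (x (cB + a)) (x (cB - b))) \<and>
      (PA (x (cA - b)) (x (cA + a)) \<longleftrightarrow> PB (x (cB - b)) (x (cB + a)))"
  proof
    assume "symmetric_sp I x PA tA \<and> symmetric_sp I x PB tB"
    then show ?thesis
      using symmetric_sp_iff_dist[of I x PA tA, OF _ cA] A_in
        symmetric_sp_iff_dist[of I x PB tB, OF _ cB] B_in pos
      by simp
  next
    assume "\<exists>u. shape_utility I x PA tA u \<and> shape_utility I x PB tB u"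
    then obtain u where "shape_utility I x PA tA u" "shape_utility I x PB tB u" by blast
    then show ?thesis
      using shape_utility_iff[of I x PA tA u, OF _ cA] A_in
        shape_utility_iff[of I x PB tB u, OF _ cB] B_in
      by simp
  qed
qed

end
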